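(* Let $\mathcal V_0 = [(\underline v_{t|0})_{t=0}^{T-1}, (\bar v_{t|0})_{t=0}^{T-1}]$ be an interval and let $\mathcal V_1 := [(\underline v_{1|0}, \ldots, \underline v_{T-1|0}, 0), (\bar v_{1|0}, \ldots, \bar v_{T-1|0}, 1)]$ (with $0, 1 \in \mathbb R^{m_u}$ the all-zero and all-one vectors). Let $x_0, x_1 \in \mathbb R^{n_x}$ be arbitrary. Suppose $\{\lambda_{t|0}, \rho_{t|0}\}_{t=0}^{T}$ and $\{\mu_{t|0}, \underline\nu_{t|0}, \bar\nu_{t|0}, \sigma_{t|0}\}_{t=0}^{T-1}$ are feasible multipliers for $\mathbf D(\mathcal V_0; x_0)$. Define - $(\lambda_{t|1}, \rho_{t|1}) := (\lambda_{t+1|0}, \rho_{t+1|0})$ for $t = 0, \ldots, T-1$, - $(\lambda_{T|1}, \rho_{T|1}) := 0$, - $(\mu_{t|1}, \underline\nu_{t|1}, \bar\nu_{t|1}, \sigma_{t|1}) := (\mu_{t+1|0}, \underline\nu_{t+1|0}, \bar\nu_{t+1|0}, \sigma_{t+1|0})$ for $t = 0, \ldots, T-2$, - $(\mu_{T-1|1}, \underline\nu_{T-1|1}, \bar\nu_{T-1|1}, \sigma_{T-1|1}) := 0$. Then $\{\lambda_{t|1}, \rho_{t|1}\}_{t=0}^{T}$, $\{\mu_{t|1}, \underline\nu_{t|1}, \bar\nu_{t|1}, \sigma_{t|1}\}_{t=0}^{T-1}$ are feasible multipliers for $\mathbf D(\mathcal V_1; x_1)$.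
   Context: Fix integers $n_x, n_u, m_u \ge 0$ and $T \ge 1$. Let $A \in \mathbb R^{n_x \times n_x}$, $B \in \mathbb R^{n_x \times (n_u+m_u)}$, and let $F, G, h$ be a matrix pair and vector defining the polyhedron $\mathcal D = \{(x,u) \in \mathbb R^{n_x} \times \mathbb R^{n_u+m_u} : F x + G u \le h\}$, assumed to contain the origin. Let $V \in \mathbb R^{m_u \times (n_u+m_u)}$ be the selection matrix extracting the $m_u$ binary entries of an input vector $u$. Let $Q$ (with $n_x$ columns) and $R$ (with $n_u + m_u$ columns) be weight matrices, possibly rank deficient. An interval is a set $\mathcal V = [(\underline v_t)_{t=0}^{T-1}, (\bar v_t)_{t=0}^{T-1}] \subset \mathbb R^{T m_u}$ with $\underline v_t, \bar v_t \in \{0,1\}^{m_u}$, $\underline v_t \le \bar v_t$. For an interval $\mathcal V$ and an initial state $\xi \in \mathbb R^{n_x}$, the QP $\mathbf P(\mathcal V; \xi)$ is: minimize $\sum_{t=0}^T |Q x_t|^2 + \sum_{t=0}^{T-1} |R u_t|^2$ over $x_0,\ldots,x_T \in \mathbb R^{n_x}$, $u_0, \ldots, u_{T-1} \in \mathbb R^{n_u+m_u}$ subject to $x_0 = \xi$, $x_{t+1} = A x_t + B u_t$, $(x_t, u_t) \in \mathcal D$, $\underline v_t \le V u_t \le \bar v_t$ for $t = 0, \ldots, T-1$. Its Lagrangian dual $\mathbf D(\mathcal V; \xi)$ is: maximize $$-\sum_{t=0}^{T} |\rho_t/2|^2 - \sum_{t=0}^{T-1}\big(|\sigma_t/2|^2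 + h'\mu_t + \bar v_t'\bar\nu_t - \underline v_t'\underline\nu_t\big) - \xi'\lambda_0$$ over multipliers $\{\lambda_t, \rho_t\}_{t=0}^T$, $\{\mu_t, \underline\nu_t, \bar\nu_t, \sigma_t\}_{t=0}^{T-1}$ of appropriate dimensions subject to: $Q'\rho_t + \lambda_t - A'\lambda_{t+1} + F'\mu_t = 0$ for $t=0,\ldots,T-1$; $Q'\rho_T + \lambda_T = 0$; $R'\sigma_t - B'\lambda_{t+1} + G'\mu_t + V'(\bar\nu_t - \underline\nu_t) = 0$ for $t = 0, \ldots, T-1$; $(\mu_t, \underline\nu_t, \bar\nu_t) \ge 0$ for $t=0,\ldots,T-1$. "Feasible multipliers" means a point satisfying these constraints. $|\cdot|$ is the Euclidean norm and $'$ denotes transpose. *)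

theory Defs
  imports "Jordan_Normal_Form.Matrix"
begin

definition nonneg_vec :: "real vec \<Rightarrow> bool" where
  "nonneg_vec v \<longleftrightarrow> (\<forall>i<dim_vec v. 0 \<le> v $ i)"

(* Standing data of the MIQP: dimensions nx, nu, mu (n_u, m_u), nc (rows of F,G,h),
   nq (rows of Q), nr (rows of R). *)
definition problem_data ::
  "nat \<Rightarrow> nat \<Rightarrow> nat \<Rightarrow> nat \<Rightarrow> nat \<Rightarrow> nat \<Rightarrow>
   real mat \<Rightarrow> real mat \<Rightarrow> real mat \<Rightarrow> real mat \<Rightarrow> real vec \<Rightarrow> real mat \<Rightarrow> real mat \<Rightarrow> real mat \<Rightarrow> bool"
where
  "problem_data nx nu mu nc nq nr A B F G h V Q R \<longleftrightarrow>
     A \<in> carrier_mat nx nx \<and> B \<in> carrier_mat nx (nu + mu) \<and>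
     F \<in> carrier_mat nc nx \<and> G \<in> carrier_mat nc (nu + mu) \<and> h \<in> carrier_vec nc \<and>
     V \<in> carrier_mat mu (nu + mu) \<and> Q \<in> carrier_mat nq nx \<and> R \<in> carrier_mat nr (nu + mu) \<and>
     \<comment> \<open>the polyhedron D contains the origin: F 0 + G 0 <= h\<close>
     nonneg_vec h \<and>
     \<comment> \<open>V is a selection matrix extracting mu distinct entries of u\<close>
     (\<exists>idx. inj_on idx {0..<mu} \<and> (\<forall>i<mu. idx i < nu + mu) \<and>
        V = mat mu (nu + mu) (\<lambda>(i, j). if j = idx i then 1 else 0))"

definition is_interval :: "nat \<Rightarrow> nat \<Rightarrow> (nat \<Rightarrow> real vec) \<Rightarrow> (nat \<Rightarrow> real vec) \<Rightarrow> bool" where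
  "is_interval mu T vl vu \<longleftrightarrow>
     (\<forall>t<T. vl t \<in> carrier_vec mu \<and> vu t \<in> carrier_vec mu \<and>
        (\<forall>i<mu. vl t $ i \<in> {0, 1} \<and> vu t $ i \<in> {0, 1} \<and> vl t $ i \<le> vu t $ i))"

(* The constraints of D(V; xi) do not involve V or xi (these only enter the objective),
   but they are kept as arguments to mirror the paper's notion. *)
definition dual_feasible ::
  "nat \<Rightarrow> nat \<Rightarrow> nat \<Rightarrow> nat \<Rightarrow> nat \<Rightarrow> nat \<Rightarrow>
   real mat \<Rightarrow> real mat \<Rightarrow> real mat \<Rightarrow> real mat \<Rightarrow> real vec \<Rightarrow> real mat \<Rightarrow> real mat \<Rightarrow> real mat \<Rightarrow>
   nat \<Rightarrow> (nat \<Rightarrow> real vec) \<Rightarrow> (nat \<Rightarrow> real vec) \<Rightarrow> real vec \<Rightarrow>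
   (nat \<Rightarrow> real vec) \<Rightarrow> (nat \<Rightarrow> real vec) \<Rightarrow>
   (nat \<Rightarrow> real vec) \<Rightarrow> (nat \<Rightarrow> real vec) \<Rightarrow> (nat \<Rightarrow> real vec) \<Rightarrow> (nat \<Rightarrow> real vec) \<Rightarrow> bool"
where
  "dual_feasible nx nu mu nc nq nr A B F G h V Q R T vl vu xi lam rho mul nul nuu sig \<longleftrightarrow>
     (\<forall>t\<le>T. lam t \<in> carrier_vec nx \<and> rho t \<in> carrier_vec nq) \<and>
     (\<forall>t<T. mul t \<in> carrier_vec nc \<and> nul t \<in> carrier_vec mu \<and> nuu t \<in> carrier_vec mu \<and>
            sig t \<in> carrier_vec nr) \<and>
     (\<forall>t<T. transpose_mat Q *\<^sub>v rho t + lam t - transpose_mat A *\<^sub>v lam (Suc t)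
              + transpose_mat F *\<^sub>v mul t = 0\<^sub>v nx) \<and>
     transpose_mat Q *\<^sub>v rho T + lam T = 0\<^sub>v nx \<and>
     (\<forall>t<T. transpose_mat R *\<^sub>v sig t - transpose_mat B *\<^sub>v lam (Suc t)
              + transpose_mat G *\<^sub>v mul t + transpose_mat V *\<^sub>v (nuu t - nul t) = 0\<^sub>v (nu + mu)) \<and>
     (\<forall>t<T. nonneg_vec (mul t) \<and> nonneg_vec (nul t) \<and> nonneg_vec (nuu t))"

end

theory Submission
  imports Defs
begin

(* Shifting feasible multipliers forward by one stage and padding them with zeros keeps them
   feasible: the stage-wise constraints are inherited, the new last stage constraint is the old
   terminal condition (with zero successor multiplier), and the new terminal and input
   constraints hold trivially. The interval and the initial state only enter the dual
   objective. *)

lemma mult_mat_vec_zero_vec [simp]: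
  "(M :: 'a :: comm_ring mat) \<in> carrier_mat n m \<Longrightarrow> M *\<^sub>v 0\<^sub>v m = 0\<^sub>v n"
  by (intro eq_vecI) auto

lemma nonneg_vec_zero_vec [simp]: "nonneg_vec (0\<^sub>v n)"
  unfolding nonneg_vec_def by simp

lemma dual_feasible_shift:
  assumes "dual_feasible nx nu mu nc nq nr A B F G h V Q R (Suc T) vl vu xi
             lam rho mul nul nuu sig"
  shows "dual_feasible nx nu mu nc nq nr A B F G h V Q R T vl' vu' xi'
           (\<lambda>t. lam (Suc t)) (\<lambda>t. rho (Suc t)) (\<lambda>t. mul (Suc t))
           (\<lambda>t. nul (Suc t)) (\<lambda>t. nuu (Suc t)) (\<lambda>t. sig (Suc t))"
  using assms unfolding dual_feasible_def by simp

lemma dual_feasible_extend_zero: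
  assumes "problem_data nx nu mu nc nq nr A B F G h V Q R"
    and "dual_feasible nx nu mu nc nq nr A B F G h V Q R T vl vu xi lam rho mul nul nuu sig"
  shows "dual_feasible nx nu mu nc nq nr A B F G h V Q R (Suc T) vl' vu' xi'
           (\<lambda>t. if t < Suc T then lam t else 0\<^sub>v nx)
           (\<lambda>t. if t < Suc T then rho t else 0\<^sub>v nq)
           (\<lambda>t. if t < T then mul t else 0\<^sub>v nc)
           (\<lambda>t. if t < T then nul t else 0\<^sub>v mu)
           (\<lambda>t. if t < T then nuu t else 0\<^sub>v mu)
           (\<lambda>t. if t < T then sig t else 0\<^sub>v nr)"
proof -
  from assms(1) have carriers: "A \<in> carrier_mat nx nx" "B \<in> carrier_mat nx (nu + mu)"
      "F \<in> carrier_mat nc nx" "G \<in> carrier_mat nc (nu + mu)" "V \<in> carrier_mat mu (nu + mu)"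
      "Q \<in> carrier_mat nq nx" "R \<in> carrier_mat nr (nu + mu)"
    unfolding problem_data_def by auto
  note feasible = assms(2)[unfolded dual_feasible_def]
  have state_eq: "transpose_mat Q *\<^sub>v rho t + lam t - transpose_mat A *\<^sub>v lam (Suc t)
      + transpose_mat F *\<^sub>v mul t = 0\<^sub>v nx" if "t < T" for t
    using feasible that by blast
  have input_eq: "transpose_mat R *\<^sub>v sig t - transpose_mat B *\<^sub>v lam (Suc t)
      + transpose_mat G *\<^sub>v mul t + transpose_mat V *\<^sub>v (nuu t - nul t) = 0\<^sub>v (nu + mu)"
    if "t < T" for t
    using feasible that by blast
  have terminal_eq: "transpose_mat Q *\<^sub>v rho T + lam T = 0\<^sub>v nx"
    using feasible by blast
  show ?thesis
    unfolding dual_feasible_def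
  proof (intro conjI allI impI)
    fix t assume "t < Suc T"
    then consider "t < T" | "t = T" by linarith
    then show "transpose_mat Q *\<^sub>v (if t < Suc T then rho t else 0\<^sub>v nq)
        + (if t < Suc T then lam t else 0\<^sub>v nx)
        - transpose_mat A *\<^sub>v (if Suc t < Suc T then lam (Suc t) else 0\<^sub>v nx)
        + transpose_mat F *\<^sub>v (if t < T then mul t else 0\<^sub>v nc) = 0\<^sub>v nx"
      by cases (use state_eq terminal_eq carriers in auto)
    show "transpose_mat R *\<^sub>v (if t < T then sig t else 0\<^sub>v nr)
        - transpose_mat B *\<^sub>v (if Suc t < Suc T then lam (Suc t) else 0\<^sub>v nx)
        + transpose_mat G *\<^sub>v (if t < T then mul t else 0\<^sub>v nc)
        + transpose_mat V *\<^sub>v ((if t < T then nuu t else 0\<^sub>v mu) - (if t < T then nul t else 0\<^sub>v mu))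
        = 0\<^sub>v (nu + mu)"
      using \<open>t < Suc T\<close> input_eq carriers by (cases "t < T") auto
  qed (use feasible carriers in \<open>auto simp: less_Suc_eq_le\<close>)
qed

theorem lemma1:
  fixes nx nu mu nc nq nr T :: nat
    and A B F G V Q R :: "real mat" and h :: "real vec"
    and vl0 vu0 :: "nat \<Rightarrow> real vec" and x0 x1 :: "real vec"
    and lam0 rho0 mul0 nul0 nuu0 sig0 :: "nat \<Rightarrow> real vec"
  assumes "T \<ge> 1"
    and "problem_data nx nu mu nc nq nr A B F G h V Q R"
    and "is_interval mu T vl0 vu0"
    and "x0 \<in> carrier_vec nx" and "x1 \<in> carrier_vec nx"
    and "dual_feasible nx nu mu nc nq nr A B F G h V Q R T vl0 vu0 x0
           lam0 rho0 mul0 nul0 nuu0 sig0"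
  shows "dual_feasible nx nu mu nc nq nr A B F G h V Q R T
           (\<lambda>t. if t < T - 1 then vl0 (Suc t) else 0\<^sub>v mu)
           (\<lambda>t. if t < T - 1 then vu0 (Suc t) else vec mu (\<lambda>_. 1))
           x1
           (\<lambda>t. if t < T then lam0 (Suc t) else 0\<^sub>v nx)
           (\<lambda>t. if t < T then rho0 (Suc t) else 0\<^sub>v nq)
           (\<lambda>t. if t < T - 1 then mul0 (Suc t) else 0\<^sub>v nc)
           (\<lambda>t. if t < T - 1 then nul0 (Suc t) else 0\<^sub>v mu)
           (\<lambda>t. if t < T - 1 then nuu0 (Suc t) else 0\<^sub>v mu)
           (\<lambda>t. if t < T - 1 then sig0 (Suc t) else 0\<^sub>v nr)"
proof -
  obtain S where T: "T = Suc S"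
    using assms(1) by (cases T) auto
  note shifted = dual_feasible_shift[OF assms(6)[unfolded T]]
  note extended = dual_feasible_extend_zero[OF assms(2) shifted]
  show ?thesis
    unfolding T diff_Suc_1
    by (rule extended)
qed

end
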